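(* Let $a,r$ be positive integers and let $h:\mathbb Z\to\mathbb Z_{\ge0}$ be given by $h(j)=a r^j$ for $j\ge 0$ and $h(j)=0$ for $j<0$. Then $\operatorname{hdepth}(h)=r$.
   Context: For a nonzero function $h:\mathbb Z\to\mathbb Z_{\ge 0}$ with $h(j)=0$ for all sufficiently negative $j$, and integers $k\le d$, set $\beta_k^d(h)=\sum_{j\le k}(-1)^{k-j}\binom{d-j}{k-j}h(j)$, and $\operatorname{hdepth}(h)=\max\{d\in\mathbb Z:\ \beta_k^d(h)\ge 0\text{ for all integers }k\le d\}$. *)

theory Defs
  imports Main
begin

text \<open>beta_k^d(h) = sum over j <= k of (-1)^(k-j) * binom(d-j, k-j) * h(j), for k <= d.
  Only j with h j \<noteq> 0 contribute; this set is finite when h vanishes for sufficiently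
  negative j.\<close>
definition beta :: "(int \<Rightarrow> int) \<Rightarrow> int \<Rightarrow> int \<Rightarrow> int" where
  "beta h d k = (\<Sum>j\<in>{j. j \<le> k \<and> h j \<noteq> 0}.
      (-1) ^ nat (k - j) * int (nat (d - j) choose nat (k - j)) * h j)"

definition hdepth :: "(int \<Rightarrow> int) \<Rightarrow> int" where
  "hdepth h = (GREATEST d. \<forall>k. k \<le> d \<longrightarrow> beta h d k \<ge> 0)"

end

theory Submission
  imports Defs
begin

text \<open>For h(j) = a r^j and k \<le> d, reversing the order of summation turns beta_k^d(h) into a
  times the alternating sum of T(m) = C(d - k + m, m) r^(k - m), m = 0..k. For d = r these terms
  decrease in m, because C(N + 1, m + 1) = (N + 1)/(m + 1) C(N, m) and N + 1 \<le> r (m + 1); so the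
  alternating sum is nonnegative. For d > r already beta_1^d(h) = a (r - d) is negative.\<close>

lemma alternating_sum_antimono_bounds:
  fixes T :: "nat \<Rightarrow> 'a :: linordered_idom"
  assumes "\<And>i. i < k \<Longrightarrow> T (Suc i) \<le> T i" and "\<And>i. i \<le> k \<Longrightarrow> 0 \<le> T i"
  shows "0 \<le> (\<Sum>i\<le>k. (-1) ^ i * T i) \<and> (\<Sum>i\<le>k. (-1) ^ i * T i) \<le> T 0"
  using assms
proof (induction k arbitrary: T)
  case 0
  then show ?case by simp
next
  case (Suc k)
  have IH: "0 \<le> (\<Sum>i\<le>k. (-1) ^ i * T (Suc i)) \<and> (\<Sum>i\<le>k. (-1) ^ i * T (Suc i)) \<le> T 1"
    using Suc.IH[of "\<lambda>i. T (Suc i)"] Suc.prems by auto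
  have "(\<Sum>i\<le>Suc k. (-1) ^ i * T i) = T 0 - (\<Sum>i\<le>k. (-1) ^ i * T (Suc i))"
    by (subst sum.atMost_Suc_shift) (simp add: sum_negf)
  moreover have "T 1 \<le> T 0" and "0 \<le> T 1"
    using Suc.prems by auto
  ultimately show ?case
    using IH by linarith
qed

lemma binomial_times_power_antimono:
  fixes r k m :: nat
  assumes "k \<le> r" and "m < k"
  shows "(r - k + Suc m choose Suc m) * r ^ (k - Suc m) \<le> (r - k + m choose m) * r ^ (k - m)"
proof -
  define N where "N = r - k + m"
  have "(Suc N choose Suc m) * Suc m = Suc N * (N choose m)"
    by (rule Suc_times_binomial_eq[symmetric])
  also have "\<dots> \<le> r * Suc m * (N choose m)"
    using assms by (intro mult_le_mono1) (simp add: N_def algebra_simps)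
  also have "\<dots> = r * (N choose m) * Suc m"
    by (simp only: ac_simps)
  finally have "(Suc N choose Suc m) \<le> r * (N choose m)"
    using mult_le_cancel2 by blast
  then have "(Suc N choose Suc m) * r ^ (k - Suc m) \<le> (N choose m) * (r * r ^ (k - Suc m))"
    by (metis mult.assoc mult.commute mult_le_mono1)
  also have "r * r ^ (k - Suc m) = r ^ (k - m)"
    using assms by (metis Suc_diff_Suc power_Suc)
  finally show ?thesis
    using assms by (simp add: N_def)
qed

lemma beta_eq_sum_from_0:
  assumes "\<And>j. j < 0 \<Longrightarrow> h j = 0"
  shows "beta h d k = (\<Sum>j\<in>{0..k}. (-1) ^ nat (k - j) * int (nat (d - j) choose nat (k - j)) * h j)"
  unfolding beta_def
proof (rule sum.mono_neutral_left)
  show "{j. j \<le> k \<and> h j \<noteq> 0} \<subseteq> {0..k}"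
    using assms by (auto simp: not_less[symmetric])
qed auto

definition geometric_hfun :: "nat \<Rightarrow> nat \<Rightarrow> int \<Rightarrow> int" where
  "geometric_hfun a r j = (if j \<ge> 0 then int a * int r ^ nat j else 0)"

lemma beta_geometric_hfun:
  fixes a r d k :: nat
  assumes "k \<le> d"
  shows "beta (geometric_hfun a r) (int d) (int k) =
    int a * (\<Sum>m\<le>k. (-1) ^ m * int ((d - k + m choose m) * r ^ (k - m)))"
proof -
  have nat_diff: "nat (int u - int x) = u - x" for u x :: nat
    by linarith
  have "beta (geometric_hfun a r) (int d) (int k) =
      (\<Sum>j\<in>int ` {0..k}. (-1) ^ nat (int k - j) * int (nat (int d - j) choose nat (int k - j))
        * geometric_hfun a r j)"
    by (subst beta_eq_sum_from_0) (auto simp: geometric_hfun_def image_int_atLeastAtMost)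
  also have "\<dots> = (\<Sum>j\<in>{0..k}. (-1) ^ (k - j) * int (d - j choose (k - j)) * (int a * int r ^ j))"
    by (subst sum.reindex) (auto simp: geometric_hfun_def nat_diff intro!: sum.cong)
  also have "\<dots> = (\<Sum>m\<in>{0..k}. (-1) ^ (k - (k + 0 - m)) * int (d - (k + 0 - m) choose (k - (k + 0 - m)))
      * (int a * int r ^ (k + 0 - m)))"
    by (rule sum.atLeastAtMost_rev)
  also have "\<dots> = int a * (\<Sum>m\<le>k. (-1) ^ m * int ((d - k + m choose m) * r ^ (k - m)))"
    unfolding sum_distrib_left atLeast0AtMost
    by (rule sum.cong) (use assms in auto)
  finally show ?thesis .
qed

lemma beta_geometric_hfun_nonneg:
  assumes "k \<le> int r"
  shows "beta (geometric_hfun a r) (int r) k \<ge> 0"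
proof (cases "k < 0")
  case True
  then show ?thesis
    by (subst beta_eq_sum_from_0) (auto simp: geometric_hfun_def)
next
  case False
  then obtain K where k: "k = int K" and "K \<le> r"
    using assms nonneg_int_cases by (metis not_less of_nat_le_iff)
  define T where "T m = int ((r - K + m choose m) * r ^ (K - m))" for m
  have "T (Suc m) \<le> T m" if "m < K" for m
    unfolding T_def of_nat_le_iff using binomial_times_power_antimono[OF \<open>K \<le> r\<close> that] .
  moreover have "0 \<le> T m" for m
    by (simp add: T_def)
  ultimately have "0 \<le> (\<Sum>m\<le>K. (-1) ^ m * T m)"
    using alternating_sum_antimono_bounds[of K T] by blast
  then show ?thesis
    using beta_geometric_hfun[OF \<open>K \<le> r\<close>, of a r] by (simp add: k T_def)
qed

lemma beta_geometric_hfun_1: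
  assumes "d \<ge> 1"
  shows "beta (geometric_hfun a r) d 1 = int a * (int r - d)"
proof -
  have "{0..(1::int)} = {0, 1}"
    by auto
  then show ?thesis
    using assms
    by (subst beta_eq_sum_from_0) (auto simp: geometric_hfun_def algebra_simps)
qed

lemma hdepth_eqI:
  assumes "\<And>k. k \<le> d \<Longrightarrow> beta h d k \<ge> 0"
    and "\<And>e. e > d \<Longrightarrow> \<exists>k\<le>e. beta h e k < 0"
  shows "hdepth h = d"
  unfolding hdepth_def
  by (rule Greatest_equality) (use assms in \<open>force simp: not_le[symmetric]\<close>)+

theorem corollary1p9:
  fixes a r :: nat
  assumes "a > 0" and "r > 0"
  shows "hdepth (\<lambda>j::int. if j \<ge> 0 then int a * int r ^ nat j else 0) = int r"
proof -
  have "hdepth (geometric_hfun a r) = int r"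
  proof (rule hdepth_eqI)
    show "beta (geometric_hfun a r) (int r) k \<ge> 0" if "k \<le> int r" for k
      using beta_geometric_hfun_nonneg that .
    show "\<exists>k\<le>e. beta (geometric_hfun a r) e k < 0" if "e > int r" for e
    proof (intro exI conjI)
      show "1 \<le> e"
        using that by linarith
      then show "beta (geometric_hfun a r) e 1 < 0"
        using that \<open>a > 0\<close> by (simp add: beta_geometric_hfun_1 mult_pos_neg)
    qed
  qed
  then show ?thesis
    by (simp add: geometric_hfun_def[abs_def])
qed

end
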